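(* For every positive integer $\ell$ and every real $\gamma\ge0$, \[ \sum_{d\mid \ell}c_\ell(d)\,d^{\gamma}\le\prod_{p^n\| \ell}(p^{-\gamma}+p^{\gamma})^n . \]
   Context: The Chebyshev coefficients $c_{j,n}$ ($0\le j\le n$) are defined by $x^n=\sum_{j=0}^n c_{j,n}U_j(x/2)$, with $U_j$ the Chebyshev polynomials of the second kind ($(1-2yx+x^2)^{-1}=\sum_{j\ge0}U_j(y)x^j$). For $d\mid\ell$, $c_\ell(d)=\prod_{p\mid\ell} c_{j_p,n_p}$ where $p^{j_p}\| d$ and $p^{n_p}\|\ell$. *)

theory Defs
  imports Complex_Main "HOL-Computational_Algebra.Primes"
begin

text \<open>Chebyshev polynomials of the second kind, U_0 = 1, U_1 = 2y,
  U_(j+2) = 2y U_(j+1) - U_j; these are exactly the coefficients of the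
  generating function 1/(1 - 2yx + x^2).\<close>
fun chebU :: "nat \<Rightarrow> real \<Rightarrow> real" where
  "chebU 0 y = 1"
| "chebU (Suc 0) y = 2 * y"
| "chebU (Suc (Suc j)) y = 2 * y * chebU (Suc j) y - chebU j y"

definition chebCoeffs :: "nat \<Rightarrow> (nat \<Rightarrow> real)" where
  "chebCoeffs n = (THE c. (\<forall>j>n. c j = 0) \<and>
      (\<forall>x::real. x ^ n = (\<Sum>j\<le>n. c j * chebU j (x / 2))))"

definition chebC :: "nat \<Rightarrow> nat \<Rightarrow> real" where
  "chebC j n = chebCoeffs n j"

definition cell :: "nat \<Rightarrow> nat \<Rightarrow> real" where
  "cell l d = (\<Prod>p\<in>prime_factors l. chebC (multiplicity p d) (multiplicity p l))"

end

theory Submission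
  imports Defs "HOL-Computational_Algebra.Polynomial" "HOL-Library.FuncSet"
begin

text \<open>Since \<open>U\<^sub>j(y)\<close> at \<open>y = (q + 1/q)/2\<close> is \<open>q\<^sup>j + q\<^sup>j\<^sup>-\<^sup>2 + \<dots> + q\<^sup>-\<^sup>j \<ge> q\<^sup>j\<close> and the
  coefficients \<open>c\<^sub>j\<^sub>,\<^sub>n\<close> are nonnegative, evaluating \<open>x\<^sup>n = \<Sum>\<^sub>j c\<^sub>j\<^sub>,\<^sub>n U\<^sub>j(x/2)\<close> at
  \<open>x = q + 1/q\<close> gives \<open>\<Sum>\<^sub>j c\<^sub>j\<^sub>,\<^sub>n q\<^sup>j \<le> (q + 1/q)\<^sup>n\<close>; with \<open>q = p\<^sup>\<gamma>\<close> this is the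
  claim for prime powers. Both sides are multiplicative over the prime factorisation of \<open>\<ell>\<close>:
  divisors of \<open>\<ell>\<close> correspond to exponent vectors bounded by those of \<open>\<ell>\<close>, and the sum over
  such vectors of a product factors into a product of sums.\<close>

text \<open>The recursion comes from \<open>x U\<^sub>j(x/2) = U\<^sub>j\<^sub>+\<^sub>1(x/2) + U\<^sub>j\<^sub>-\<^sub>1(x/2)\<close>.\<close>

fun cheb_coeff :: "nat \<Rightarrow> nat \<Rightarrow> real" where
  "cheb_coeff 0 j = (if j = 0 then 1 else 0)"
| "cheb_coeff (Suc n) j = (if j = 0 then 0 else cheb_coeff n (j - 1)) + cheb_coeff n (j + 1)"

lemma cheb_coeff_eq_0: "n < j \<Longrightarrow> cheb_coeff n j = 0"
  by (induction n arbitrary: j) auto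

lemma cheb_coeff_nonneg: "cheb_coeff n j \<ge> 0"
  by (induction n arbitrary: j) auto

lemma mult_chebU: "x * chebU j (x / 2) = chebU (Suc j) (x / 2) + (if j = 0 then 0 else chebU (j - 1) (x / 2))"
  by (cases j) auto

lemma power_eq_sum_cheb_coeff: "x ^ n = (\<Sum>j\<le>n. cheb_coeff n j * chebU j (x / 2))"
proof (induction n)
  case 0
  then show ?case by simp
next
  case (Suc n)
  define u where "u j = chebU j (x / 2)" for j
  have IH: "x ^ n = (\<Sum>j\<le>n. cheb_coeff n j * u j)"
    using Suc u_def by simp
  have shift_up: "(\<Sum>j\<le>Suc n. (if j = 0 then 0 else cheb_coeff n (j - 1)) * u j)
      = (\<Sum>j\<le>n. cheb_coeff n j * u (Suc j))"
    by (subst sum.atMost_Suc_shift) simp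
  have "(\<Sum>j\<le>Suc n. cheb_coeff n (j + 1) * u j) = (\<Sum>j\<le>n. cheb_coeff n (j + 1) * u j)"
    by (simp add: cheb_coeff_eq_0)
  also have "\<dots> = (\<Sum>j\<le>Suc n. if j = 0 then 0 else cheb_coeff n j * u (j - 1))"
    by (subst sum.atMost_Suc_shift) simp
  also have "\<dots> = (\<Sum>j\<le>n. if j = 0 then 0 else cheb_coeff n j * u (j - 1))"
    by (simp add: cheb_coeff_eq_0)
  finally have shift_down: "(\<Sum>j\<le>Suc n. cheb_coeff n (j + 1) * u j)
      = (\<Sum>j\<le>n. if j = 0 then 0 else cheb_coeff n j * u (j - 1))" .
  have "(\<Sum>j\<le>Suc n. cheb_coeff (Suc n) j * u j)
      = (\<Sum>j\<le>n. cheb_coeff n j * u (Suc j)) + (\<Sum>j\<le>n. if j = 0 then 0 else cheb_coeff n j * u (j - 1))"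
    by (simp add: sum.distrib algebra_simps flip: shift_up shift_down)
  also have "\<dots> = (\<Sum>j\<le>n. cheb_coeff n j * (x * u j))"
    unfolding sum.distrib[symmetric] by (rule sum.cong) (auto simp: u_def mult_chebU algebra_simps)
  also have "\<dots> = x ^ Suc n"
    by (simp add: IH sum_distrib_left algebra_simps)
  finally show ?case
    by (simp add: u_def)
qed

text \<open>\<open>cheb_poly j\<close> is the monic polynomial \<open>U\<^sub>j(x/2)\<close>; its monicity gives the
  uniqueness of the expansion needed to evaluate the \<open>THE\<close> in \<open>chebCoeffs\<close>.\<close>

fun cheb_poly :: "nat \<Rightarrow> real poly" where
  "cheb_poly 0 = 1"
| "cheb_poly (Suc 0) = [:0, 1:]"
| "cheb_poly (Suc (Suc j)) = pCons 0 (cheb_poly (Suc j)) - cheb_poly j"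

lemma poly_cheb_poly: "poly (cheb_poly j) x = chebU j (x / 2)"
  by (induction j rule: cheb_poly.induct) auto

lemma coeff_cheb_poly: "coeff (cheb_poly j) j = 1 \<and> (\<forall>k>j. coeff (cheb_poly j) k = 0)"
proof (induction j rule: cheb_poly.induct)
  case 1
  then show ?case by auto
next
  case 2
  then show ?case by (auto simp: coeff_pCons split: nat.splits)
next
  case (3 j)
  show ?case
  proof (intro conjI allI impI)
    show "coeff (cheb_poly (Suc (Suc j))) (Suc (Suc j)) = 1"
      using 3 by simp
    show "coeff (cheb_poly (Suc (Suc j))) k = 0" if "k > Suc (Suc j)" for k
      using 3 that by (cases k) auto
  qed
qed

lemma cheb_poly_combination_eq_0_imp:
  assumes "(\<Sum>j\<le>m. smult (a j) (cheb_poly j)) = 0"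
  shows "\<forall>j\<le>m. a j = 0"
  using assms
proof (induction m)
  case 0
  then show ?case using coeff_cheb_poly[of 0] by simp
next
  case (Suc m)
  have "coeff (\<Sum>j\<le>Suc m. smult (a j) (cheb_poly j)) (Suc m)
      = (\<Sum>j\<le>Suc m. a j * coeff (cheb_poly j) (Suc m))"
    by (simp add: coeff_sum)
  also have "\<dots> = (\<Sum>j\<le>m. a j * coeff (cheb_poly j) (Suc m)) + a (Suc m)"
    using coeff_cheb_poly[of "Suc m"] by simp
  also have "(\<Sum>j\<le>m. a j * coeff (cheb_poly j) (Suc m)) = 0"
    by (rule sum.neutral) (use coeff_cheb_poly in auto)
  finally have "coeff (\<Sum>j\<le>Suc m. smult (a j) (cheb_poly j)) (Suc m) = a (Suc m)"
    by simp
  then have "a (Suc m) = 0"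
    using Suc.prems by (metis coeff_0)
  moreover from this have "(\<Sum>j\<le>m. smult (a j) (cheb_poly j)) = 0"
    using Suc.prems by simp
  ultimately show ?case
    using Suc.IH by (auto simp: le_Suc_eq)
qed

lemma chebCoeffs_eq_cheb_coeff: "chebCoeffs n = cheb_coeff n"
  unfolding chebCoeffs_def
proof (rule the_equality)
  show "(\<forall>j>n. cheb_coeff n j = 0) \<and> (\<forall>x. x ^ n = (\<Sum>j\<le>n. cheb_coeff n j * chebU j (x / 2)))"
    using cheb_coeff_eq_0 power_eq_sum_cheb_coeff by blast
next
  fix c
  assume c: "(\<forall>j>n. c j = 0) \<and> (\<forall>x::real. x ^ n = (\<Sum>j\<le>n. c j * chebU j (x / 2)))"
  have "poly (\<Sum>j\<le>n. smult (c j - cheb_coeff n j) (cheb_poly j)) x = 0" for x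
    using c power_eq_sum_cheb_coeff[of x n]
    by (simp add: poly_sum poly_cheb_poly sum_subtractf algebra_simps)
  then have "(\<Sum>j\<le>n. smult (c j - cheb_coeff n j) (cheb_poly j)) = 0"
    using poly_all_0_iff_0 by blast
  then have "\<forall>j\<le>n. c j = cheb_coeff n j"
    using cheb_poly_combination_eq_0_imp by fastforce
  then show "c = cheb_coeff n"
    using c cheb_coeff_eq_0 by (metis not_le ext)
qed

lemma chebC_eq_cheb_coeff: "chebC j n = cheb_coeff n j"
  by (simp add: chebC_def chebCoeffs_eq_cheb_coeff)

text \<open>The first conjunct (the ratio \<open>U\<^sub>j\<^sub>+\<^sub>1/U\<^sub>j \<ge> q\<close>) is what makes the induction go through.\<close>

lemma chebU_joukowski_ge:
  fixes q :: real
  assumes "q \<ge> 1"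
  defines "y \<equiv> (q + 1 / q) / 2"
  shows "q * chebU j y \<le> chebU (Suc j) y \<and> q ^ j \<le> chebU j y"
proof (induction j)
  case 0
  then show ?case using assms by simp
next
  case (Suc j)
  then have ratio: "q * chebU j y \<le> chebU (Suc j) y" and lower: "q ^ j \<le> chebU j y"
    by auto
  have q_pos: "q > 0"
    using assms by simp
  have "chebU (Suc (Suc j)) y = (q + 1 / q) * chebU (Suc j) y - chebU j y"
    by (simp add: y_def)
  also have "\<dots> \<ge> (q + 1 / q) * chebU (Suc j) y - chebU (Suc j) y / q"
    using ratio q_pos by (simp add: field_simps)
  finally have "q * chebU (Suc j) y \<le> chebU (Suc (Suc j)) y"
    by (simp add: field_simps)
  moreover have "q * q ^ j \<le> q * chebU j y"
    using lower q_pos by simp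
  then have "q ^ Suc j \<le> chebU (Suc j) y"
    using ratio by simp
  ultimately show ?case ..
qed

lemma sum_cheb_coeff_mult_power_le:
  fixes q :: real
  assumes "q \<ge> 1"
  shows "(\<Sum>j\<le>n. cheb_coeff n j * q ^ j) \<le> (1 / q + q) ^ n"
proof -
  have "(\<Sum>j\<le>n. cheb_coeff n j * q ^ j) \<le> (\<Sum>j\<le>n. cheb_coeff n j * chebU j ((q + 1 / q) / 2))"
    by (intro sum_mono mult_left_mono) (use chebU_joukowski_ge[OF assms] cheb_coeff_nonneg in auto)
  also have "\<dots> = (q + 1 / q) ^ n"
    using power_eq_sum_cheb_coeff[of "q + 1 / q" n] by simp
  finally show ?thesis
    by (simp add: add.commute)
qed

lemma prod_prime_factors_multiplicity_dvd:
  fixes d l :: nat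
  assumes "d dvd l" "l > 0"
  shows "(\<Prod>p\<in>prime_factors l. p ^ multiplicity p d) = d"
proof -
  have "d > 0"
    using assms by (intro gr0I) auto
  have "(\<Prod>p\<in>prime_factors l. p ^ multiplicity p d) = (\<Prod>p\<in>prime_factors d. p ^ multiplicity p d)"
    using assms \<open>d > 0\<close>
    by (intro prod.mono_neutral_right[OF finite_set_mset dvd_prime_factors])
       (auto simp: prime_factors_multiplicity)
  also have "\<dots> = d"
    using prime_factorization_nat[OF \<open>d > 0\<close>] by simp
  finally show ?thesis .
qed

lemma multiplicity_prod_prime_factors_powers:
  assumes "p \<in> prime_factors n"
  shows "multiplicity p (\<Prod>q\<in>prime_factors n. q ^ e q) = e p"
  using assms by (simp add: multiplicity_prod_prime_powers in_prime_factors_imp_prime)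

lemma bij_betw_exponents_divisors:
  fixes l :: nat
  assumes "l > 0"
  shows "bij_betw (\<lambda>e. \<Prod>p\<in>prime_factors l. p ^ e p)
           (PiE (prime_factors l) (\<lambda>p. {..multiplicity p l})) {d. d dvd l}"
proof (rule bij_betw_byWitness[where f' = "\<lambda>d. restrict (\<lambda>p. multiplicity p d) (prime_factors l)"])
  show "\<forall>e\<in>PiE (prime_factors l) (\<lambda>p. {..multiplicity p l}).
      restrict (\<lambda>p. multiplicity p (\<Prod>p\<in>prime_factors l. p ^ e p)) (prime_factors l) = e"
    by (auto simp: PiE_def extensional_def multiplicity_prod_prime_factors_powers)
  show "\<forall>d\<in>{d. d dvd l}. (\<Prod>p\<in>prime_factors l. p ^ restrict (\<lambda>p. multiplicity p d) (prime_factors l) p) = d"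
    using prod_prime_factors_multiplicity_dvd[OF _ assms] by simp
  have "(\<Prod>p\<in>prime_factors l. p ^ e p) dvd (\<Prod>p\<in>prime_factors l. p ^ multiplicity p l)"
    if "e \<in> PiE (prime_factors l) (\<lambda>p. {..multiplicity p l})" for e
    using that by (intro prod_dvd_prod le_imp_power_dvd) auto
  then show "(\<lambda>e. \<Prod>p\<in>prime_factors l. p ^ e p) ` PiE (prime_factors l) (\<lambda>p. {..multiplicity p l})
      \<subseteq> {d. d dvd l}"
    using prime_factorization_nat[OF assms] by auto
  show "(\<lambda>d. restrict (\<lambda>p. multiplicity p d) (prime_factors l)) ` {d. d dvd l}
      \<subseteq> PiE (prime_factors l) (\<lambda>p. {..multiplicity p l})"
    using assms by (auto intro: dvd_imp_multiplicity_le)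
qed

lemma cell_prod_prime_powers:
  "cell l (\<Prod>p\<in>prime_factors l. p ^ e p) = (\<Prod>p\<in>prime_factors l. cheb_coeff (multiplicity p l) (e p))"
  unfolding cell_def chebC_eq_cheb_coeff
  by (intro prod.cong) (simp_all add: multiplicity_prod_prime_factors_powers)

lemma power_powr_nonneg:
  fixes x :: real
  assumes "x \<ge> 0"
  shows "(x ^ n) powr \<gamma> = (x powr \<gamma>) ^ n"
  using assms by (induction n) (auto simp: powr_mult)

theorem lemma6p1:
  fixes l :: nat and \<gamma> :: real
  assumes "l > 0" and "\<gamma> \<ge> 0"
  shows "(\<Sum>d | d dvd l. cell l d * real d powr \<gamma>)
           \<le> (\<Prod>p\<in>prime_factors l. (real p powr (-\<gamma>) + real p powr \<gamma>) ^ multiplicity p l)"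
proof -
  define q where "q p = real p powr \<gamma>" for p :: nat
  have q_ge_1: "q p \<ge> 1" if "p \<in> prime_factors l" for p
  proof -
    have "real p \<ge> 1"
      using prime_ge_1_nat[OF in_prime_factors_imp_prime[OF that]] by simp
    then show ?thesis
      using assms(2) by (simp add: q_def ge_one_powr_ge_zero)
  qed
  have "(\<Sum>d | d dvd l. cell l d * real d powr \<gamma>)
      = (\<Sum>e\<in>PiE (prime_factors l) (\<lambda>p. {..multiplicity p l}).
           \<Prod>p\<in>prime_factors l. cheb_coeff (multiplicity p l) (e p) * q p ^ e p)"
    by (simp add: sum.reindex_bij_betw[OF bij_betw_exponents_divisors[OF assms(1)], symmetric]
        cell_prod_prime_powers prod_powr_distrib power_powr_nonneg q_def prod.distrib)
  also have "\<dots> = (\<Prod>p\<in>prime_factors l. \<Sum>j\<le>multiplicity p l. cheb_coeff (multiplicity p l) j * q p ^ j)"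
    by (rule prod_sum_PiE[symmetric]) auto
  also have "\<dots> \<le> (\<Prod>p\<in>prime_factors l. (1 / q p + q p) ^ multiplicity p l)"
    by (intro prod_mono conjI sum_nonneg mult_nonneg_nonneg cheb_coeff_nonneg zero_le_power
        sum_cheb_coeff_mult_power_le q_ge_1) (auto simp: q_def)
  also have "\<dots> = (\<Prod>p\<in>prime_factors l. (real p powr (-\<gamma>) + real p powr \<gamma>) ^ multiplicity p l)"
    by (simp add: q_def powr_minus_divide)
  finally show ?thesis .
qed

end
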